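(* Let $H_1, \dots ,H_t$ be graphs such that each $H_i$ is $(\alpha_i, A_i, \eta_i)$-Erdős–Simonovits good (with $0\le\alpha_i<1$). Fix an edge $f_i$ in each $H_i$, and let $\mathcal{H}$ be the set of all graphs formed by gluing the $H_i$'s along the $f_i$'s. Let $\alpha = \max_{1\leq i \leq t}\alpha_i$. Then $$\mathrm{ex}(n, \mathcal{H}) = O(n^{1 + \alpha}).$$ Moreover, if $|\mathcal{H}| = 1$, then the unique graph in $\mathcal{H}$ is $(\alpha,A, \eta)$-Erdős–Simonovits good for some constants $A, \eta>0$.
   Context: A graph $H$ is $(\alpha, A, \eta)$-Erdős–Simonovits good if every $n$-vertex graph $G$ with $pn^2\geq An^{1 + \alpha}$ edges contains at least $\eta p^{\mathrm{e}(H)}n^{v(H)}$ copies of $H$. Gluing the $H_i$ along the $f_i$: take the vertex-disjoint union of the $H_i$ and identify all the edges $f_i$ into one edge, choosing for each $i$ one of the two ways of matching the endpoints of $f_i$ to the two endpoints of the common edge; $\mathcal{H}$ is the set of all graphs arising from all such choices. $\mathrm{ex}(n,\mathcal{H})$ is the maximum number of edges in an $n$-vertex graph containing no member of $\mathcal{H}$. *)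

theory Defs
  imports Complex_Main "HOL-Library.FuncSet" "HOL-Library.Landau_Symbols"
begin

definition graph :: "'v set \<Rightarrow> 'v set set \<Rightarrow> bool" where
  "graph V E \<longleftrightarrow> finite V \<and> (\<forall>e\<in>E. e \<subseteq> V \<and> card e = 2)"

definition embeddings :: "'v set \<Rightarrow> 'v set set \<Rightarrow> 'w set \<Rightarrow> 'w set set \<Rightarrow> ('v \<Rightarrow> 'w) set" where
  "embeddings VH EH VG EG =
     {\<phi>. \<phi> \<in> VH \<rightarrow>\<^sub>E VG \<and> inj_on \<phi> VH \<and> (\<forall>e\<in>EH. \<phi> ` e \<in> EG)}"

definition copies :: "'v set \<Rightarrow> 'v set set \<Rightarrow> 'w set \<Rightarrow> 'w set set \<Rightarrow> nat" where
  "copies VH EH VG EG = card (embeddings VH EH VG EG)"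

definition contains :: "'w set \<Rightarrow> 'w set set \<Rightarrow> 'v set \<Rightarrow> 'v set set \<Rightarrow> bool" where
  "contains VG EG VH EH \<longleftrightarrow> embeddings VH EH VG EG \<noteq> {}"

text \<open>Host graphs are taken with vertices in nat (every finite graph is isomorphic to one).\<close>
definition ES_good :: "real \<Rightarrow> real \<Rightarrow> real \<Rightarrow> 'v set \<Rightarrow> 'v set set \<Rightarrow> bool" where
  "ES_good \<alpha> A \<eta> VH EH \<longleftrightarrow>
     (\<forall>(V::nat set) E n. graph V E \<and> card V = n \<and> n > 0 \<and>
        real (card E) \<ge> A * real n powr (1 + \<alpha>) \<longrightarrow>
        real (copies VH EH V E) \<ge>
          \<eta> * (real (card E) / real n ^ 2) ^ card EH * real n ^ card VH)"

definition ex :: "nat \<Rightarrow> ('w set \<times> 'w set set) set \<Rightarrow> nat" where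
  "ex n F = Max {card E | E. graph {0..<n} E \<and>
                  (\<forall>H\<in>F. \<not> contains {0..<n::nat} E (fst H) (snd H))}"

text \<open>Gluing H_0,...,H_{t-1} (vertex sets V i, edge sets E i) along the edges
  f_i = {a i, b i}: the common edge is {Inl True, Inl False}; sigma i chooses
  which endpoint of f_i goes to Inl True.\<close>
definition glue_map :: "(nat \<Rightarrow> nat) \<Rightarrow> (nat \<Rightarrow> nat) \<Rightarrow> (nat \<Rightarrow> bool) \<Rightarrow> nat \<Rightarrow> nat \<Rightarrow> bool + nat \<times> nat" where
  "glue_map a b \<sigma> i v =
     (if v = a i then Inl (\<sigma> i) else if v = b i then Inl (\<not> \<sigma> i) else Inr (i, v))"

definition glue_V :: "nat \<Rightarrow> (nat \<Rightarrow> nat set) \<Rightarrow> (nat \<Rightarrow> nat) \<Rightarrow> (nat \<Rightarrow> nat) \<Rightarrow> (nat \<Rightarrow> bool) \<Rightarrow> (bool + nat \<times> nat) set" where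
  "glue_V t V a b \<sigma> = (\<Union>i<t. glue_map a b \<sigma> i ` V i)"

definition glue_E :: "nat \<Rightarrow> (nat \<Rightarrow> nat set set) \<Rightarrow> (nat \<Rightarrow> nat) \<Rightarrow> (nat \<Rightarrow> nat) \<Rightarrow> (nat \<Rightarrow> bool) \<Rightarrow> (bool + nat \<times> nat) set set" where
  "glue_E t E a b \<sigma> = (\<Union>i<t. (\<lambda>e. glue_map a b \<sigma> i ` e) ` E i)"

definition glued_family :: "nat \<Rightarrow> (nat \<Rightarrow> nat set) \<Rightarrow> (nat \<Rightarrow> nat set set) \<Rightarrow> (nat \<Rightarrow> nat) \<Rightarrow> (nat \<Rightarrow> nat)
      \<Rightarrow> ((bool + nat \<times> nat) set \<times> (bool + nat \<times> nat) set set) set" where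
  "glued_family t V E a b = {(glue_V t V a b \<sigma>, glue_E t E a b \<sigma>) | \<sigma>. True}"

definition graph_iso :: "'v set \<Rightarrow> 'v set set \<Rightarrow> 'w set \<Rightarrow> 'w set set \<Rightarrow> bool" where
  "graph_iso V1 E1 V2 E2 \<longleftrightarrow>
     (\<exists>\<phi>. bij_betw \<phi> V1 V2 \<and> (\<lambda>e. \<phi> ` e) ` E1 = E2)"

end

theory Submission
  imports Defs
begin

text \<open>
  Let s be the total number of vertices of H_1, ..., H_t and let G have n vertices and
  e = p n^2 >= A' n^(1 + alpha) edges. Call an edge xy of G poorly rooted for H_i if some set C
  of at most s vertices avoiding xy leaves fewer than tau_i = c_i p^(e(H_i) - 1) n^(v(H_i) - 2)
  copies of H_i that map f_i onto xy and avoid C. Fewer than e/(2t) edges are poorly rooted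
  for H_i: averaging over all vertex sets W with n <= 2|W| + s yields a W keeping a
  2^(-(3 + s)) fraction of them inside W with their sets C outside W. These edges span a graph
  on W whose density is comparable to p, so the Erdos-Simonovits property of H_i forces more
  copies of H_i in it than poorly rooted edges can carry.

  On each of the remaining e/2 edges xy, choosing copies of H_1, ..., H_t one after another,
  each avoiding the vertices used so far, gives at least tau_1 ... tau_t tuples of copies that
  meet only in xy, and every such tuple is a copy of one of the 2^t glued graphs. Hence some
  glued graph occurs once e >= A' n^(1 + alpha), which bounds ex(n, H). If all glued graphs
  are isomorphic, the single one occurs at least 2^(-t) (e/2) tau_1 ... tau_t times, which is
  of order p^e(H) n^v(H).
\<close>

section \<open>Graphs and embeddings\<close>

lemma finite_embeddings:
  assumes "finite VH" "finite VG"
  shows "finite (embeddings VH EH VG EG)"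
proof (rule finite_subset)
  show "embeddings VH EH VG EG \<subseteq> VH \<rightarrow>\<^sub>E VG" unfolding embeddings_def by auto
  show "finite (VH \<rightarrow>\<^sub>E VG)" using assms by (rule finite_PiE)
qed

lemma embeddingsD:
  assumes "\<phi> \<in> embeddings VH EH VG EG"
  shows "\<phi> \<in> VH \<rightarrow>\<^sub>E VG" "inj_on \<phi> VH" "\<And>e. e \<in> EH \<Longrightarrow> \<phi> ` e \<in> EG"
  using assms unfolding embeddings_def by auto

lemma embeddings_mono:
  assumes "W \<subseteq> VG" "F \<subseteq> EG"
  shows "embeddings VH EH W F \<subseteq> embeddings VH EH VG EG"
  using assms unfolding embeddings_def by (auto simp: PiE_iff)

lemma ES_goodD:
  fixes V :: "nat set"
  assumes "ES_good \<alpha> A \<eta> VH EH" "graph V E" "card V = n" "0 < n"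
    and "A * real n powr (1 + \<alpha>) \<le> real (card E)"
  shows "\<eta> * (real (card E) / real n ^ 2) ^ card EH * real n ^ card VH \<le> real (copies VH EH V E)"
  using assms unfolding ES_good_def by blast

lemma graph_finite_edges: "graph V E \<Longrightarrow> finite E"
  unfolding graph_def by (meson Pow_iff finite_Pow_iff finite_subset subsetI)

lemma graph_card_edges_le:
  assumes "graph V E"
  shows "card E \<le> card V ^ 2"
proof -
  have fin: "finite V" using assms unfolding graph_def by auto
  have "card E \<le> card {B. B \<subseteq> V \<and> card B = 2}"
    using assms fin unfolding graph_def by (intro card_mono) auto
  also have "\<dots> = card V choose 2" using fin by (simp add: n_subsets)
  also have "\<dots> \<le> card V ^ 2"
    by (cases "2 \<le> card V") (simp_all add: binomial_le_pow binomial_eq_0)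
  finally show ?thesis .
qed

lemma graph_edge_endpoints:
  assumes "graph V E" "{x, y} \<in> E"
  shows "x \<noteq> y" "x \<in> V" "y \<in> V"
  using assms unfolding graph_def by (auto simp: card_insert_if split: if_splits)

lemma graph_card_vertices_ge_2:
  assumes "graph V E" "{x, y} \<in> E"
  shows "2 \<le> card V"
proof -
  have "finite V" using assms(1) unfolding graph_def by auto
  then have "card {x, y} \<le> card V"
    using graph_edge_endpoints[OF assms] by (intro card_mono) auto
  then show ?thesis using graph_edge_endpoints(1)[OF assms] by simp
qed

lemma graph_edge_not_subset:
  assumes "graph V E" "e \<in> E" "e \<noteq> {x, y}"
  shows "\<exists>v\<in>e. v \<notin> {x, y}"
proof (rule ccontr)
  assume "\<not> ?thesis"
  then have "e \<subseteq> {x, y}" by auto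
  moreover have "card e = 2" using assms unfolding graph_def by auto
  moreover have "card {x, y} \<le> 2" by (simp add: card_insert_if)
  ultimately have "e = {x, y}" by (intro card_seteq) auto
  with assms(3) show False ..
qed

lemma card_2_eq_Min_Max:
  fixes X :: "'a::linorder set"
  assumes "card X = 2"
  shows "X = {Min X, Max X}" "Min X \<noteq> Max X"
proof -
  obtain x y where "X = {x, y}" "x \<noteq> y" using assms by (auto simp: card_2_iff)
  then show "X = {Min X, Max X}" "Min X \<noteq> Max X" by (auto simp: min_def max_def)
qed

lemma copies_le_if_graph_iso:
  assumes iso: "graph_iso V1 E1 V2 E2" and edges: "\<forall>e\<in>E1. e \<subseteq> V1"
    and fin: "finite V1" "finite VG"
  shows "copies V2 E2 VG EG \<le> copies V1 E1 VG EG"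
proof -
  obtain \<beta> where bij: "bij_betw \<beta> V1 V2" and im: "(\<lambda>e. \<beta> ` e) ` E1 = E2"
    using iso unfolding graph_iso_def by blast
  define h where "h \<psi> = restrict (\<psi> \<circ> \<beta>) V1" for \<psi> :: "'b \<Rightarrow> 'c"
  have "h \<psi> \<in> embeddings V1 E1 VG EG" if "\<psi> \<in> embeddings V2 E2 VG EG" for \<psi>
  proof -
    have "inj_on (\<psi> \<circ> \<beta>) V1"
      using bij that unfolding bij_betw_def embeddings_def by (auto intro: comp_inj_on)
    moreover have "h \<psi> ` e = \<psi> ` (\<beta> ` e)" if "e \<in> E1" for e
      using edges that unfolding h_def by auto
    ultimately show ?thesis
      using that bij im unfolding embeddings_def h_def bij_betw_def inj_on_def
      by (auto simp: PiE_iff)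
  qed
  moreover have "inj_on h (embeddings V2 E2 VG EG)"
  proof (rule inj_onI)
    fix \<psi> \<psi>' assume "\<psi> \<in> embeddings V2 E2 VG EG" "\<psi>' \<in> embeddings V2 E2 VG EG" "h \<psi> = h \<psi>'"
    moreover have "\<psi> u = \<psi>' u" if "u \<in> V2" "h \<psi> = h \<psi>'" for u
      using that bij fun_cong[of "h \<psi>" "h \<psi>'"] unfolding h_def bij_betw_def
      by (metis (no_types, lifting) comp_apply imageE restrict_apply)
    ultimately show "\<psi> = \<psi>'"
      unfolding embeddings_def by (auto simp: PiE_iff intro: extensionalityI)
  qed
  ultimately show ?thesis
    unfolding copies_def using finite_embeddings[OF fin]
    by (intro card_inj_on_le) auto
qed

section \<open>Averaging over large vertex subsets\<close>

lemma card_half_subsets: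
  assumes "finite R"
  shows "2 ^ card R \<le> 2 * card {W. W \<subseteq> R \<and> card R \<le> 2 * card W}"
proof -
  let ?S = "{W. W \<subseteq> R \<and> card R \<le> 2 * card W}"
  have "Pow R \<subseteq> ?S \<union> (\<lambda>W. R - W) ` ?S"
  proof
    fix W assume "W \<in> Pow R"
    then have W: "W \<subseteq> R" and "card (R - W) + card W = card R"
      using assms by (auto simp: card_Diff_subset card_mono finite_subset)
    moreover have "W = R - (R - W)" using W by auto
    ultimately show "W \<in> ?S \<union> (\<lambda>W. R - W) ` ?S"
      by (cases "card R \<le> 2 * card W") auto
  qed
  then have "card (Pow R) \<le> card (?S \<union> (\<lambda>W. R - W) ` ?S)"
    using assms by (intro card_mono) auto
  also have "\<dots> \<le> card ?S + card ((\<lambda>W. R - W) ` ?S)" by (rule card_Un_le)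
  also have "\<dots> \<le> 2 * card ?S" using card_image_le[of ?S "\<lambda>W. R - W"] assms by simp
  finally show ?thesis using assms by (simp add: card_Pow)
qed

lemma card_large_subsets_containing_avoiding:
  assumes fin: "finite V" and X: "X \<subseteq> V" "card X \<le> k"
    and C: "C \<subseteq> V" "C \<inter> X = {}" "card C \<le> s"
  shows "2 ^ card V \<le> 2 ^ (k + 1 + s) *
           card {W. W \<subseteq> V \<and> card V \<le> 2 * card W + s \<and> X \<subseteq> W \<and> C \<inter> W = {}}"
proof -
  define R where "R = V - X - C"
  define S where "S = {W. W \<subseteq> R \<and> card R \<le> 2 * card W}"
  let ?T = "{W. W \<subseteq> V \<and> card V \<le> 2 * card W + s \<and> X \<subseteq> W \<and> C \<inter> W = {}}"
  have finR: "finite R" and finX: "finite X" and finC: "finite C"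
    using fin X C finite_subset unfolding R_def by auto
  have "card (R \<union> (X \<union> C)) = card R + card (X \<union> C)"
    by (rule card_Un_disjoint) (use finR finX finC in \<open>auto simp: R_def\<close>)
  moreover have "V = R \<union> (X \<union> C)" using X C unfolding R_def by auto
  ultimately have "card V = card R + card (X \<union> C)" by simp
  also have "card (X \<union> C) = card X + card C"
    using finX finC C by (intro card_Un_disjoint) auto
  finally have cV: "card V = card R + card X + card C" by simp
  have "X \<union> W \<in> ?T" if "W \<in> S" for W
  proof -
    have "W \<subseteq> R" "card R \<le> 2 * card W" using that unfolding S_def by auto
    moreover have "card (X \<union> W) = card X + card W"
      using \<open>W \<subseteq> R\<close> finX finR by (intro card_Un_disjoint) (auto simp: R_def finite_subset)
    ultimately show ?thesis using cV C X unfolding R_def by auto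
  qed
  moreover have "inj_on (\<lambda>W. X \<union> W) S"
    unfolding S_def R_def by (rule inj_onI) blast
  moreover have "finite ?T" using fin by simp
  ultimately have "card S \<le> card ?T" by (intro card_inj_on_le) auto
  have "(2::nat) ^ card V = 2 ^ card R * 2 ^ (card X + card C)" using cV by (simp add: power_add)
  also have "\<dots> \<le> (2 * card S) * 2 ^ (k + s)"
    using card_half_subsets[OF finR] X C unfolding S_def
    by (intro mult_mono power_increasing) auto
  also have "\<dots> \<le> 2 ^ (k + 1 + s) * card ?T"
    using \<open>card S \<le> card ?T\<close> by (simp add: power_add)
  finally show ?thesis .
qed

text \<open>A deterministic version of choosing \<open>W\<close> at random among the sets with
  \<open>card V \<le> 2 * card W + s\<close>.\<close>

lemma exists_half_subset_keeping_many:
  assumes fin: "finite V"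
    and B: "\<And>X. X \<in> B \<Longrightarrow> X \<subseteq> V \<and> card X \<le> k \<and> C X \<subseteq> V \<and> C X \<inter> X = {} \<and> card (C X) \<le> s"
  obtains W where "W \<subseteq> V" "card V \<le> 2 * card W + s"
    "card B \<le> 2 ^ (k + 1 + s) * card {X\<in>B. X \<subseteq> W \<and> C X \<inter> W = {}}"
proof -
  define WW where "WW = {W. W \<subseteq> V \<and> card V \<le> 2 * card W + s}"
  define kept where "kept W = card {X\<in>B. X \<subseteq> W \<and> C X \<inter> W = {}}" for W
  have finWW: "finite WW" using fin unfolding WW_def by simp
  have "B \<subseteq> Pow V" using B by auto
  then have finB: "finite B" using fin by (simp add: finite_subset)
  have "V \<in> WW" unfolding WW_def by simp
  then have "Max (kept ` WW) \<in> kept ` WW" using finWW by (intro Max_in) auto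
  then obtain W0 where W0: "W0 \<in> WW" "kept W0 = Max (kept ` WW)" by (metis imageE)
  have double_count: "(\<Sum>X\<in>B. card {W\<in>WW. X \<subseteq> W \<and> C X \<inter> W = {}}) = (\<Sum>W\<in>WW. kept W)"
    using sum.swap_restrict[OF finB finWW, of "\<lambda>_ _. 1::nat" "\<lambda>X W. X \<subseteq> W \<and> C X \<inter> W = {}"]
    unfolding kept_def by simp
  have "2 ^ card V * card B = (\<Sum>X\<in>B. 2 ^ card V)" by simp
  also have "\<dots> \<le> (\<Sum>X\<in>B. 2 ^ (k + 1 + s) * card {W\<in>WW. X \<subseteq> W \<and> C X \<inter> W = {}})"
  proof (rule sum_mono)
    fix X assume "X \<in> B"
    then have "2 ^ card V \<le> 2 ^ (k + 1 + s) *
        card {W. W \<subseteq> V \<and> card V \<le> 2 * card W + s \<and> X \<subseteq> W \<and> C X \<inter> W = {}}"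
      using B by (intro card_large_subsets_containing_avoiding[OF fin]) auto
    moreover have "{W. W \<subseteq> V \<and> card V \<le> 2 * card W + s \<and> X \<subseteq> W \<and> C X \<inter> W = {}}
        = {W\<in>WW. X \<subseteq> W \<and> C X \<inter> W = {}}" unfolding WW_def by auto
    ultimately show "2 ^ card V \<le> 2 ^ (k + 1 + s) * card {W\<in>WW. X \<subseteq> W \<and> C X \<inter> W = {}}"
      by simp
  qed
  also have "\<dots> = 2 ^ (k + 1 + s) * (\<Sum>W\<in>WW. kept W)"
    by (simp add: sum_distrib_left[symmetric] double_count)
  also have "\<dots> \<le> 2 ^ (k + 1 + s) * (card WW * kept W0)"
    using sum_bounded_above[of WW kept "kept W0"] finWW W0 by (simp add: Max_ge)
  also have "\<dots> \<le> 2 ^ (k + 1 + s) * (2 ^ card V * kept W0)"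
    using card_mono[of "Pow V" WW] fin unfolding WW_def by (auto simp: card_Pow)
  finally have "card B \<le> 2 ^ (k + 1 + s) * kept W0" by (simp add: algebra_simps)
  then show ?thesis using that W0(1) unfolding WW_def kept_def by auto
qed

lemma exists_dense_half_subgraph:
  assumes G: "graph VG EG" "card VG = n" "2 * s \<le> n" and B: "B \<subseteq> EG" "B \<noteq> {}"
    and C: "\<And>xy. xy \<in> B \<Longrightarrow> C xy \<subseteq> VG \<and> card (C xy) \<le> s \<and> C xy \<inter> xy = {}"
  obtains W F where "W \<subseteq> VG" "F \<subseteq> B" "graph W F" "\<And>xy. xy \<in> F \<Longrightarrow> C xy \<inter> W = {}"
    "card B \<le> 2 ^ (3 + s) * card F" "0 < card W" "card W \<le> n" "n \<le> 4 * card W"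
proof -
  have finG: "finite VG" using G(1) unfolding graph_def by simp
  have edges: "xy \<subseteq> VG \<and> card xy = 2" if "xy \<in> EG" for xy using G(1) that unfolding graph_def by auto
  obtain W where W: "W \<subseteq> VG" "card VG \<le> 2 * card W + s"
    and kept: "card B \<le> 2 ^ (2 + 1 + s) * card {xy\<in>B. xy \<subseteq> W \<and> C xy \<inter> W = {}}"
  proof (rule exists_half_subset_keeping_many[OF finG, of B 2 C s])
    fix xy assume "xy \<in> B"
    then show "xy \<subseteq> VG \<and> card xy \<le> 2 \<and> C xy \<subseteq> VG \<and> C xy \<inter> xy = {} \<and> card (C xy) \<le> s"
      using C[of xy] edges[of xy] B by auto
  qed
  define F where "F = {xy\<in>B. xy \<subseteq> W \<and> C xy \<inter> W = {}}"
  have "graph W F" using W finG edges B unfolding graph_def F_def by (auto intro: finite_subset)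
  have kept: "card B \<le> 2 ^ (3 + s) * card F" using kept unfolding F_def by simp
  moreover have "0 < card B" using B graph_finite_edges[OF G(1)] by (simp add: card_gt_0_iff finite_subset)
  ultimately have "F \<noteq> {}" by auto
  then have "W \<noteq> {}" using edges B unfolding F_def by fastforce
  then have "0 < card W" "card W \<le> n" "n \<le> 4 * card W"
    using W G finG by (auto simp: card_gt_0_iff card_mono finite_subset)
  then show ?thesis using that[of W F] W kept \<open>graph W F\<close> unfolding F_def by blast
qed

section \<open>Rooted copies\<close>

definition rooted_embeddings ::
    "'v set \<Rightarrow> 'v set set \<Rightarrow> 'v \<Rightarrow> 'v \<Rightarrow> 'w set \<Rightarrow> 'w set set \<Rightarrow> 'w set \<Rightarrow> 'w set \<Rightarrow> ('v \<Rightarrow> 'w) set" where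
  "rooted_embeddings VH EH a b VG EG xy C =
     {\<phi> \<in> embeddings VH EH VG EG. \<phi> ` {a, b} = xy \<and> \<phi> ` VH \<inter> C = {}}"

lemma finite_rooted_embeddings:
  assumes "finite VH" "finite VG"
  shows "finite (rooted_embeddings VH EH a b VG EG xy C)"
proof (rule finite_subset)
  show "rooted_embeddings VH EH a b VG EG xy C \<subseteq> embeddings VH EH VG EG"
    unfolding rooted_embeddings_def by (rule Collect_subset)
qed (rule finite_embeddings[OF assms])

lemma embeddings_subset_UN_rooted_embeddings:
  assumes sub: "W \<subseteq> VG" "F \<subseteq> EG" and "{a, b} \<in> EH" and avoid: "\<forall>xy\<in>F. C xy \<inter> W = {}"
  shows "embeddings VH EH W F \<subseteq> (\<Union>xy\<in>F. rooted_embeddings VH EH a b VG EG xy (C xy))"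
proof
  fix \<psi> assume \<psi>: "\<psi> \<in> embeddings VH EH W F"
  then have xy: "\<psi> ` {a, b} \<in> F" using \<open>{a, b} \<in> EH\<close> unfolding embeddings_def by blast
  have "\<psi> ` VH \<subseteq> W" using \<psi> unfolding embeddings_def by auto
  then have "\<psi> ` VH \<inter> C (\<psi> ` {a, b}) = {}" using avoid xy by blast
  moreover have "\<psi> \<in> embeddings VH EH VG EG" using \<psi> embeddings_mono[OF sub] by blast
  ultimately show "\<psi> \<in> (\<Union>xy\<in>F. rooted_embeddings VH EH a b VG EG xy (C xy))"
    using xy unfolding rooted_embeddings_def by blast
qed

lemma copies_less_if_few_rooted_embeddings:
  assumes fin: "finite VH" "finite VG" "finite F" and "F \<noteq> {}"
    and sub: "W \<subseteq> VG" "F \<subseteq> EG" and "{a, b} \<in> EH"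
    and few: "\<And>xy. xy \<in> F \<Longrightarrow>
      C xy \<inter> W = {} \<and> real (card (rooted_embeddings VH EH a b VG EG xy (C xy))) < \<tau>"
  shows "real (copies VH EH W F) < \<tau> * real (card F)"
proof -
  have "copies VH EH W F \<le> card (\<Union>xy\<in>F. rooted_embeddings VH EH a b VG EG xy (C xy))"
    unfolding copies_def using embeddings_subset_UN_rooted_embeddings[OF sub \<open>{a, b} \<in> EH\<close>] few
    by (intro card_mono) (simp_all add: fin finite_rooted_embeddings)
  also have "\<dots> \<le> (\<Sum>xy\<in>F. card (rooted_embeddings VH EH a b VG EG xy (C xy)))"
    using \<open>finite F\<close> by (rule card_UN_le)
  finally have "real (copies VH EH W F)
      \<le> (\<Sum>xy\<in>F. real (card (rooted_embeddings VH EH a b VG EG xy (C xy))))"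
    by (metis of_nat_le_iff of_nat_sum)
  also have "\<dots> < (\<Sum>xy\<in>F. \<tau>)" using few fin \<open>F \<noteq> {}\<close> by (intro sum_strict_mono) auto
  finally show ?thesis by (simp add: mult.commute)
qed
text \<open>On a subgraph with \<open>m\<close> vertices and \<open>f\<close> edges the Erdos-Simonovits lower bound
  (right) beats the upper bound \<open>f * \<tau>\<close> coming from poorly rooted edges (left).\<close>

lemma ES_bound_exceeds_rooted_bound:
  fixes \<eta> K e f m n :: real and h v :: nat
  assumes "0 < \<eta>" "0 < K" "0 < e" "0 < m" "m \<le> n" "n \<le> 4 * m" "e / K \<le> f" "f \<le> e"
    and "1 \<le> h" "2 \<le> v"
  shows "\<eta> / (2 * K ^ h * 4 ^ v) * (e / n ^ 2) ^ (h - 1) * n ^ (v - 2) * f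
           < \<eta> * (f / m ^ 2) ^ h * m ^ v"
proof -
  define p where "p = e / n ^ 2"
  define X where "X = \<eta> / (2 * K ^ h * 4 ^ v) * p ^ h * n ^ v"
  have "0 < n" using assms by linarith
  have "0 < f" using assms(2,3,7) by (meson divide_pos_pos less_le_trans)
  have "0 < p" using \<open>0 < n\<close> assms by (simp add: p_def)
  then have "0 < X" using \<open>0 < n\<close> assms by (simp add: X_def)
  note pos = \<open>0 < n\<close> \<open>0 < f\<close> \<open>0 < p\<close> \<open>0 < X\<close>
  have "\<eta> / (2 * K ^ h * 4 ^ v) * p ^ (h - 1) * n ^ (v - 2) * f
      \<le> \<eta> / (2 * K ^ h * 4 ^ v) * p ^ (h - 1) * n ^ (v - 2) * e"
    using assms pos by (intro mult_left_mono) auto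
  also have "\<dots> = X"
  proof -
    have e: "e = p * n ^ 2" using pos unfolding p_def by simp
    have ph: "p ^ (h - 1) * p = p ^ h" using \<open>1 \<le> h\<close> by (simp flip: power_Suc2)
    have nv: "n ^ (v - 2) * n ^ 2 = n ^ v"
    proof -
      have "n ^ v = n ^ (v - 2 + 2)" using \<open>2 \<le> v\<close> by (simp only: le_add_diff_inverse2)
      also have "\<dots> = n ^ (v - 2) * n ^ 2" by (rule power_add)
      finally show ?thesis by (rule sym)
    qed
    have "\<eta> / (2 * K ^ h * 4 ^ v) * p ^ (h - 1) * n ^ (v - 2) * e
        = \<eta> / (2 * K ^ h * 4 ^ v) * (p ^ (h - 1) * p) * (n ^ (v - 2) * n ^ 2)"
      unfolding e by (simp only: mult_ac)
    then show ?thesis unfolding X_def ph nv .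
  qed
  also have "\<dots> < 2 * X" using pos by simp
  also have "2 * X = \<eta> * (p / K) ^ h * (n / 4) ^ v"
    unfolding X_def using assms by (simp add: power_divide field_simps)
  also have "\<dots> \<le> \<eta> * (f / m ^ 2) ^ h * m ^ v"
  proof -
    have "p / K \<le> f / m ^ 2"
    proof -
      have "p / K \<le> f / n ^ 2" using assms pos unfolding p_def by (simp add: field_simps)
      also have "\<dots> \<le> f / m ^ 2" using assms pos by (intro divide_left_mono power_mono) auto
      finally show ?thesis .
    qed
    then show ?thesis using assms pos by (intro mult_mono mult_left_mono power_mono) auto
  qed
  finally show ?thesis unfolding p_def .
qed

definition poorly_rooted_edges ::
    "'v set \<Rightarrow> 'v set set \<Rightarrow> 'v \<Rightarrow> 'v \<Rightarrow> 'w set \<Rightarrow> 'w set set \<Rightarrow> nat \<Rightarrow> real \<Rightarrow> 'w set set" where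
  "poorly_rooted_edges VH EH a b VG EG s \<tau> = {xy\<in>EG. \<exists>C. C \<subseteq> VG \<and> card C \<le> s \<and> C \<inter> xy = {} \<and>
      real (card (rooted_embeddings VH EH a b VG EG xy C)) < \<tau>}"

lemma not_poorly_rootedD:
  assumes "xy \<in> EG" "xy \<notin> poorly_rooted_edges VH EH a b VG EG s \<tau>"
    and "C \<subseteq> VG" "card C \<le> s" "C \<inter> xy = {}"
  shows "\<tau> \<le> real (card (rooted_embeddings VH EH a b VG EG xy C))"
  using assms unfolding poorly_rooted_edges_def by (simp add: not_less)

lemma card_poorly_rooted_edges_less:
  fixes VG :: "nat set" and VH :: "'v set"
  assumes G: "graph VG EG" "card VG = n" "EG \<noteq> {}"
    and H: "graph VH EH" "{a, b} \<in> EH" and "0 < \<eta>" and ES: "ES_good \<alpha> A \<eta> VH EH"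
    and "0 < L" "0 \<le> \<alpha>" "2 * s \<le> n"
    and dense: "L * 2 ^ (3 + s) * max A 0 * real n powr (1 + \<alpha>) \<le> real (card EG)"
  shows "real (card (poorly_rooted_edges VH EH a b VG EG s
           (\<eta> / (2 * (L * 2 ^ (3 + s)) ^ card EH * 4 ^ card VH)
              * (real (card EG) / real n ^ 2) ^ (card EH - 1) * real n ^ (card VH - 2))))
         < real (card EG) / L"
proof (rule ccontr)
  define e where "e = real (card EG)"
  define K :: real where "K = L * 2 ^ (3 + s)"
  define \<tau> where "\<tau> = \<eta> / (2 * K ^ card EH * 4 ^ card VH)
    * (e / real n ^ 2) ^ (card EH - 1) * real n ^ (card VH - 2)"
  define B where "B = poorly_rooted_edges VH EH a b VG EG s \<tau>"
  define bad where "bad xy C \<longleftrightarrow> C \<subseteq> VG \<and> card C \<le> s \<and> C \<inter> xy = {} \<and>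
    real (card (rooted_embeddings VH EH a b VG EG xy C)) < \<tau>" for xy C
  define C where "C xy = (SOME C. bad xy C)" for xy
  assume "\<not> ?thesis"
  then have "e / L \<le> real (card B)" unfolding B_def \<tau>_def K_def e_def by linarith
  have C: "bad xy (C xy)" if "xy \<in> B" for xy
  proof -
    from that obtain C0 where "bad xy C0" unfolding B_def poorly_rooted_edges_def bad_def by auto
    then show ?thesis unfolding C_def by (rule someI)
  qed
  have finG: "finite VG" "finite EG" using G(1) graph_finite_edges[OF G(1)] unfolding graph_def by auto
  have "0 < e" "0 < K" using finG G \<open>0 < L\<close> unfolding e_def K_def by (auto simp: card_gt_0_iff)
  then have "B \<noteq> {}" using \<open>e / L \<le> _\<close> divide_pos_pos[OF \<open>0 < e\<close> \<open>0 < L\<close>] by auto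
  moreover have "B \<subseteq> EG" unfolding B_def poorly_rooted_edges_def by blast
  ultimately obtain W F where W: "W \<subseteq> VG" "F \<subseteq> B" "graph W F" "\<And>xy. xy \<in> F \<Longrightarrow> C xy \<inter> W = {}"
    and kept: "card B \<le> 2 ^ (3 + s) * card F" and m: "0 < card W" "card W \<le> n" "n \<le> 4 * card W"
    using exists_dense_half_subgraph[OF G(1,2) \<open>2 * s \<le> n\<close>, of B C] C unfolding bad_def by metis
  have "real (card B) \<le> 2 ^ (3 + s) * real (card F)" using of_nat_mono[OF kept] by simp
  with \<open>e / L \<le> _\<close> have "e / L \<le> 2 ^ (3 + s) * real (card F)" by linarith
  then have "e / K \<le> real (card F)" using \<open>0 < L\<close> unfolding K_def by (simp add: field_simps)
  then have "F \<noteq> {}" using divide_pos_pos[OF \<open>0 < e\<close> \<open>0 < K\<close>] by auto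
  have "F \<subseteq> EG" "finite F" using finG W(2) \<open>B \<subseteq> EG\<close> by (auto intro: finite_subset)
  have "A * real (card W) powr (1 + \<alpha>) \<le> max A 0 * real n powr (1 + \<alpha>)"
    using m \<open>0 \<le> \<alpha>\<close> by (intro mult_mono powr_mono2) auto
  also have "\<dots> \<le> e / K" using dense \<open>0 < K\<close> unfolding K_def e_def by (simp add: pos_le_divide_eq mult_ac)
  finally have lower: "\<eta> * (real (card F) / real (card W) ^ 2) ^ card EH * real (card W) ^ card VH
      \<le> real (copies VH EH W F)"
    using \<open>e / K \<le> _\<close> m by (intro ES_goodD[OF ES \<open>graph W F\<close> refl]) auto
  have upper: "real (copies VH EH W F) < \<tau> * real (card F)"
    using H finG W \<open>F \<subseteq> EG\<close> \<open>finite F\<close> \<open>F \<noteq> {}\<close> C unfolding graph_def bad_def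
    by (intro copies_less_if_few_rooted_embeddings[where C=C and EG=EG]) auto
  have "card EH \<ge> 1" using H graph_finite_edges by (metis One_nat_def Suc_leI card_gt_0_iff empty_iff)
  moreover have "card VH \<ge> 2" using H by (rule graph_card_vertices_ge_2)
  moreover have "real (card F) \<le> e" using card_mono[OF finG(2) \<open>F \<subseteq> EG\<close>] unfolding e_def by simp
  ultimately show False
    using ES_bound_exceeds_rooted_bound[OF \<open>0 < \<eta>\<close> \<open>0 < K\<close> \<open>0 < e\<close>,
        of "real (card W)" "real n" "real (card F)" "card EH" "card VH"] m lower upper \<open>e / K \<le> _\<close>
    unfolding \<tau>_def by auto
qed

section \<open>Tuples of rooted copies\<close>

definition rooted_tuples ::
    "nat \<Rightarrow> (nat \<Rightarrow> 'v set) \<Rightarrow> (nat \<Rightarrow> 'v set set) \<Rightarrow> (nat \<Rightarrow> 'v) \<Rightarrow> (nat \<Rightarrow> 'v)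
      \<Rightarrow> 'w set \<Rightarrow> 'w set set \<Rightarrow> 'w set \<Rightarrow> (nat \<Rightarrow> 'v \<Rightarrow> 'w) set" where
  "rooted_tuples j V E a b VG EG xy =
     {\<Phi> \<in> (\<Pi>\<^sub>E i\<in>{..<j}. embeddings (V i) (E i) VG EG).
        (\<forall>i<j. \<Phi> i ` {a i, b i} = xy) \<and> (\<forall>i<j. \<forall>k<j. i \<noteq> k \<longrightarrow> \<Phi> i ` V i \<inter> \<Phi> k ` V k \<subseteq> xy)}"

lemma finite_rooted_tuples:
  assumes "finite VG" "\<forall>i<j. finite (V i)"
  shows "finite (rooted_tuples j V E a b VG EG xy)"
proof (rule finite_subset)
  show "rooted_tuples j V E a b VG EG xy \<subseteq> (\<Pi>\<^sub>E i\<in>{..<j}. embeddings (V i) (E i) VG EG)"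
    unfolding rooted_tuples_def by (rule Collect_subset)
  show "finite (\<Pi>\<^sub>E i\<in>{..<j}. embeddings (V i) (E i) VG EG)"
    using assms by (intro finite_PiE) (auto intro: finite_embeddings)
qed

lemma rooted_tuples_0: "rooted_tuples 0 V E a b VG EG xy = {\<lambda>_. undefined}"
  unfolding rooted_tuples_def by auto

lemma rooted_tuplesD:
  assumes "\<Phi> \<in> rooted_tuples t V E a b VG EG xy" "i < t"
  shows "\<Phi> i \<in> embeddings (V i) (E i) VG EG" "\<Phi> i ` {a i, b i} = xy"
    "\<And>k. k < t \<Longrightarrow> i \<noteq> k \<Longrightarrow> \<Phi> i ` V i \<inter> \<Phi> k ` V k \<subseteq> xy"
  using assms unfolding rooted_tuples_def by auto

lemma fun_upd_in_rooted_tuples: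
  assumes \<Phi>: "\<Phi> \<in> rooted_tuples j V E a b VG EG xy"
    and \<phi>: "\<phi> \<in> rooted_embeddings (V j) (E j) (a j) (b j) VG EG xy ((\<Union>i<j. \<Phi> i ` V i) - xy)"
  shows "\<Phi>(j := \<phi>) \<in> rooted_tuples (Suc j) V E a b VG EG xy"
proof -
  have new: "\<phi> ` V j \<inter> \<Phi> i ` V i \<subseteq> xy" if "i < j" for i
    using \<phi> that unfolding rooted_embeddings_def by blast
  show ?thesis
    using \<Phi> \<phi> new unfolding rooted_tuples_def rooted_embeddings_def
    by (auto simp: PiE_iff less_Suc_eq extensional_def)
qed

lemma card_rooted_tuple_image_le:
  assumes "\<Phi> \<in> rooted_tuples j V E a b VG EG xy" "\<forall>i<j. finite (V i)"
  shows "card ((\<Union>i<j. \<Phi> i ` V i) - xy) \<le> (\<Sum>i<j. card (V i))"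
proof -
  have "card ((\<Union>i<j. \<Phi> i ` V i) - xy) \<le> card (\<Union>i<j. \<Phi> i ` V i)"
    using assms(2) by (intro card_mono) auto
  also have "\<dots> \<le> (\<Sum>i<j. card (\<Phi> i ` V i))" by (rule card_UN_le) simp
  also have "\<dots> \<le> (\<Sum>i<j. card (V i))" using assms(2) by (intro sum_mono card_image_le) auto
  finally show ?thesis .
qed

lemma sum_card_extensions_le:
  fixes V :: "nat \<Rightarrow> 'v set" and VG :: "'w set"
  assumes fin: "finite VG" "\<forall>i\<le>j. finite (V i)"
  shows "(\<Sum>\<Phi>\<in>rooted_tuples j V E a b VG EG xy.
           card (rooted_embeddings (V j) (E j) (a j) (b j) VG EG xy ((\<Union>i<j. \<Phi> i ` V i) - xy)))
         \<le> card (rooted_tuples (Suc j) V E a b VG EG xy)"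
proof -
  define T where "T = rooted_tuples j V E a b VG EG xy"
  define X where "X \<Phi> = rooted_embeddings (V j) (E j) (a j) (b j) VG EG xy ((\<Union>i<j. \<Phi> i ` V i) - xy)"
    for \<Phi> :: "nat \<Rightarrow> 'v \<Rightarrow> 'w"
  have "inj_on (\<lambda>(\<Phi>, \<phi>). \<Phi>(j := \<phi>)) (Sigma T X)"
  proof (rule inj_onI, clarify)
    fix \<Phi> \<phi> \<Psi> \<psi> assume "\<Phi> \<in> T" "\<Psi> \<in> T" and eq: "\<Phi>(j := \<phi>) = \<Psi>(j := \<psi>)"
    then have "\<Phi> j = \<Psi> j" unfolding T_def rooted_tuples_def by (auto simp: PiE_iff extensional_def)
    with eq show "\<Phi> = \<Psi> \<and> \<phi> = \<psi>" by (metis fun_upd_eqD fun_upd_triv fun_upd_upd)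
  qed
  moreover have "(\<lambda>(\<Phi>, \<phi>). \<Phi>(j := \<phi>)) ` Sigma T X \<subseteq> rooted_tuples (Suc j) V E a b VG EG xy"
    unfolding T_def X_def by (auto intro: fun_upd_in_rooted_tuples)
  ultimately have "card (Sigma T X) \<le> card (rooted_tuples (Suc j) V E a b VG EG xy)"
    using fin by (simp add: card_inj_on_le finite_rooted_tuples)
  moreover have "card (Sigma T X) = (\<Sum>\<Phi>\<in>T. card (X \<Phi>))"
    using fin by (simp add: card_SigmaI T_def X_def finite_rooted_tuples finite_rooted_embeddings)
  ultimately show ?thesis unfolding T_def X_def by simp
qed

lemma card_rooted_tuples_ge:
  fixes V :: "nat \<Rightarrow> 'v set" and VG :: "'w set"
  assumes fin: "finite VG" "\<forall>i<t. finite (V i)" and s: "(\<Sum>i<t. card (V i)) \<le> s"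
    and many: "\<And>i C. i < t \<Longrightarrow> C \<subseteq> VG \<Longrightarrow> card C \<le> s \<Longrightarrow> C \<inter> xy = {} \<Longrightarrow>
      \<tau> i \<le> real (card (rooted_embeddings (V i) (E i) (a i) (b i) VG EG xy C))"
    and \<tau>: "\<And>i. i < t \<Longrightarrow> 0 \<le> \<tau> i"
  shows "(\<Prod>i<t. \<tau> i) \<le> real (card (rooted_tuples t V E a b VG EG xy))"
proof -
  have "(\<Prod>i<j. \<tau> i) \<le> real (card (rooted_tuples j V E a b VG EG xy))" if "j \<le> t" for j
    using that
  proof (induction j)
    case 0
    then show ?case by (simp add: rooted_tuples_0)
  next
    case (Suc j)
    let ?T = "rooted_tuples j V E a b VG EG xy"
    let ?X = "\<lambda>\<Phi>. rooted_embeddings (V j) (E j) (a j) (b j) VG EG xy ((\<Union>i<j. \<Phi> i ` V i) - xy)"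
    have extensions: "\<tau> j \<le> real (card (?X \<Phi>))" if "\<Phi> \<in> ?T" for \<Phi>
    proof (rule many)
      have "(\<Sum>i<j. card (V i)) \<le> (\<Sum>i<t. card (V i))" using Suc.prems by (intro sum_mono2) auto
      then show "card ((\<Union>i<j. \<Phi> i ` V i) - xy) \<le> s"
        using card_rooted_tuple_image_le[OF that] Suc.prems fin s by auto
      show "(\<Union>i<j. \<Phi> i ` V i) - xy \<subseteq> VG"
        using rooted_tuplesD(1)[OF that] unfolding embeddings_def by (auto simp: PiE_iff)
    qed (use Suc.prems in auto)
    have "(\<Prod>i<j. \<tau> i) * \<tau> j \<le> real (card ?T) * \<tau> j"
      using Suc \<tau> by (intro mult_right_mono) auto
    also have "\<dots> \<le> (\<Sum>\<Phi>\<in>?T. real (card (?X \<Phi>)))"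
      using sum_mono[OF extensions] by simp
    also have "\<dots> \<le> real (card (rooted_tuples (Suc j) V E a b VG EG xy))"
      using sum_card_extensions_le[of VG j V] fin Suc.prems by (simp flip: of_nat_sum)
    finally show ?case by simp
  qed
  then show ?thesis by simp
qed

section \<open>Gluing\<close>

locale gluing =
  fixes t :: nat and V :: "nat \<Rightarrow> nat set" and E :: "nat \<Rightarrow> nat set set" and a b :: "nat \<Rightarrow> nat"
  assumes one_le_t: "1 \<le> t"
    and graphs: "\<And>i. i < t \<Longrightarrow> graph (V i) (E i)"
    and root_edges: "\<And>i. i < t \<Longrightarrow> {a i, b i} \<in> E i"
begin

lemma finite_V: "i < t \<Longrightarrow> finite (V i)"
  using graphs unfolding graph_def by blast

lemma root_endpoints:
  assumes "i < t"
  shows "a i \<noteq> b i" "a i \<in> V i" "b i \<in> V i"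
  using graph_edge_endpoints[OF graphs root_edges, OF assms assms] by auto

lemma finite_glue_V: "finite (glue_V t V a b \<sigma>)"
  unfolding glue_V_def using finite_V by auto

lemma glue_E_subset: "e \<in> glue_E t E a b \<sigma> \<Longrightarrow> e \<subseteq> glue_V t V a b \<sigma>"
  using graphs unfolding glue_E_def glue_V_def graph_def by blast

lemma Inl_in_glue_V: "Inl \<beta> \<in> glue_V t V a b \<sigma>"
proof -
  have "glue_map a b \<sigma> 0 (a 0) \<in> glue_V t V a b \<sigma>" "glue_map a b \<sigma> 0 (b 0) \<in> glue_V t V a b \<sigma>"
    using one_le_t root_endpoints[of 0] unfolding glue_V_def by auto
  then show ?thesis
    using root_endpoints(1)[of 0] one_le_t unfolding glue_map_def by (cases \<beta>; cases "\<sigma> 0") auto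
qed

lemma card_glue_V_le: "card (glue_V t V a b \<sigma>) \<le> 2 + (\<Sum>i<t. card (V i) - 2)"
proof -
  let ?inner = "\<lambda>i. glue_map a b \<sigma> i ` (V i - {a i, b i})"
  have "glue_V t V a b \<sigma> \<subseteq> {Inl True, Inl False} \<union> (\<Union>i<t. ?inner i)"
    unfolding glue_V_def glue_map_def by auto
  then have "card (glue_V t V a b \<sigma>) \<le> card ({Inl True, Inl False} \<union> (\<Union>i<t. ?inner i))"
    using finite_V by (intro card_mono) auto
  also have "\<dots> \<le> 2 + (\<Sum>i<t. card (?inner i))"
    using card_Un_le[of "{Inl True, Inl False}" "\<Union>i<t. ?inner i"] card_UN_le[of "{..<t}" ?inner] by simp
  also have "\<dots> \<le> 2 + (\<Sum>i<t. card (V i) - 2)"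
  proof (intro add_left_mono sum_mono)
    fix i assume "i \<in> {..<t}"
    then have "t > i" by simp
    have "card (?inner i) \<le> card (V i - {a i, b i})"
      using finite_V[OF \<open>t > i\<close>] by (intro card_image_le) simp
    also have "\<dots> = card (V i) - 2"
      using finite_V[OF \<open>t > i\<close>] root_endpoints[OF \<open>t > i\<close>] by (simp add: card_Diff_subset)
    finally show "card (?inner i) \<le> card (V i) - 2" .
  qed
  finally show ?thesis .
qed

lemma Inr_in_glued_edge:
  assumes "i < t" "e \<in> E i" "e \<noteq> {a i, b i}"
  shows "\<exists>v. Inr (i, v) \<in> glue_map a b \<sigma> i ` e"
proof -
  obtain v where "v \<in> e" "v \<notin> {a i, b i}" using graph_edge_not_subset[OF graphs] assms by meson
  then have "glue_map a b \<sigma> i v = Inr (i, v)" unfolding glue_map_def by auto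
  then show ?thesis using \<open>v \<in> e\<close> by (metis imageI)
qed

lemma Inr_in_glue_map_image: "Inr (k, v) \<in> glue_map a b \<sigma> i ` e \<Longrightarrow> k = i"
  unfolding glue_map_def by (auto split: if_splits)

lemma card_glue_E_ge: "1 + (\<Sum>i<t. card (E i) - 1) \<le> card (glue_E t E a b \<sigma>)"
proof -
  define img where "img i = (\<lambda>e. glue_map a b \<sigma> i ` e) ` (E i - {{a i, b i}})" for i
  define root :: "(bool + nat \<times> nat) set" where "root = {Inl True, Inl False}"
  have finE: "finite (E i)" if "i < t" for i by (rule graph_finite_edges[OF graphs[OF that]])
  have "root = glue_map a b \<sigma> 0 ` {a 0, b 0}"
    using root_endpoints[of 0] one_le_t unfolding root_def glue_map_def by auto
  moreover have "glue_map a b \<sigma> 0 ` {a 0, b 0} \<in> (\<lambda>e. glue_map a b \<sigma> 0 ` e) ` E 0"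
    using one_le_t by (intro imageI root_edges) simp
  ultimately have "root \<in> glue_E t E a b \<sigma>"
    using one_le_t unfolding glue_E_def by (intro UN_I[of 0]) auto
  moreover have "(\<Union>i<t. img i) \<subseteq> glue_E t E a b \<sigma>" unfolding img_def glue_E_def by auto
  ultimately have "card (insert root (\<Union>i<t. img i)) \<le> card (glue_E t E a b \<sigma>)"
    using finE unfolding glue_E_def by (intro card_mono) auto
  moreover have "root \<notin> img i" if i: "i < t" for i
  proof
    assume "root \<in> img i"
    then obtain e where "e \<in> E i" "e \<noteq> {a i, b i}" "root = glue_map a b \<sigma> i ` e"
      unfolding img_def by auto
    then obtain v where "Inr (i, v) \<in> root" using Inr_in_glued_edge[OF i] by metis
    then show False unfolding root_def by simp
  qed
  moreover have "img i \<inter> img k = {}" if "i < t" "i \<noteq> k" for i k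
  proof (rule ccontr)
    assume "img i \<inter> img k \<noteq> {}"
    then obtain e e' where "e \<in> E i" "e \<noteq> {a i, b i}"
      and same: "glue_map a b \<sigma> i ` e = glue_map a b \<sigma> k ` e'"
      unfolding img_def by auto
    then obtain v where "Inr (i, v) \<in> glue_map a b \<sigma> k ` e'" using Inr_in_glued_edge[OF \<open>i < t\<close>] by metis
    then show False using Inr_in_glue_map_image \<open>i \<noteq> k\<close> by blast
  qed
  moreover have "card (img i) = card (E i) - 1" if "i < t" for i
  proof -
    have "inj_on (\<lambda>e. glue_map a b \<sigma> i ` e) (E i - {{a i, b i}})"
      using graphs[OF that] root_endpoints[OF that]
      by (intro inj_on_subset[OF inj_on_image_Pow]) (auto simp: glue_map_def inj_on_def graph_def)
    then show ?thesis using finE[OF that] root_edges[OF that] by (simp add: img_def card_image)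
  qed
  ultimately show ?thesis using finE by (simp add: img_def card_UN_disjoint)
qed

text \<open>The common edge goes to \<open>(x, y)\<close> and the rest of \<open>H_i\<close> follows \<open>\<Phi> i\<close>; this is a copy of
  the glued graph for the orientation \<open>\<sigma> i = (\<Phi> i (a i) = x)\<close>.\<close>

definition glued_embedding ::
    "(nat \<Rightarrow> bool) \<Rightarrow> 'w \<Rightarrow> 'w \<Rightarrow> (nat \<Rightarrow> nat \<Rightarrow> 'w) \<Rightarrow> bool + nat \<times> nat \<Rightarrow> 'w" where
  "glued_embedding \<sigma> x y \<Phi> =
     restrict (\<lambda>u. case u of Inl \<beta> \<Rightarrow> if \<beta> then x else y | Inr (i, v) \<Rightarrow> \<Phi> i v) (glue_V t V a b \<sigma>)"

lemma glued_embedding_Inl: "glued_embedding \<sigma> x y \<Phi> (Inl \<beta>) = (if \<beta> then x else y)"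
  using Inl_in_glue_V unfolding glued_embedding_def by simp

lemma glue_map_eq_Inl:
  assumes i: "i < t" and \<phi>: "inj_on \<phi> (V i)" "\<phi> ` {a i, b i} = {x, y}" "x \<noteq> y"
    and \<sigma>: "\<sigma> i = (\<phi> (a i) = x)" and v: "v \<in> V i" "\<phi> v \<in> {x, y}"
  shows "glue_map a b \<sigma> i v = Inl (\<phi> v = x)"
proof -
  have ab: "a i \<noteq> b i" "a i \<in> V i" "b i \<in> V i" using root_endpoints[OF i] by auto
  have "\<phi> v \<in> \<phi> ` {a i, b i}" using v(2) \<phi>(2) by simp
  then have "v = a i \<or> v = b i" using inj_on_image_mem_iff[OF \<phi>(1) v(1)] ab by blast
  moreover have "\<phi> (a i) \<noteq> \<phi> (b i)" using \<phi>(1) ab by (meson inj_onD)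
  moreover have "\<phi> (a i) = x \<and> \<phi> (b i) = y \<or> \<phi> (a i) = y \<and> \<phi> (b i) = x"
    using \<phi>(2) by (simp add: doubleton_eq_iff)
  ultimately show ?thesis using \<sigma> \<open>x \<noteq> y\<close> ab(1) unfolding glue_map_def by auto
qed

context
  fixes VG :: "'w set" and EG \<Phi> x y \<sigma>
  assumes \<Phi>: "\<Phi> \<in> rooted_tuples t V E a b VG EG {x, y}" and "x \<noteq> y"
    and \<sigma>: "\<And>i. i < t \<Longrightarrow> \<sigma> i = (\<Phi> i (a i) = x)"
begin

lemma glue_map_eq_Inl_tuple:
  "i < t \<Longrightarrow> v \<in> V i \<Longrightarrow> \<Phi> i v \<in> {x, y} \<Longrightarrow> glue_map a b \<sigma> i v = Inl (\<Phi> i v = x)"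
  using \<Phi> \<sigma> \<open>x \<noteq> y\<close> by (intro glue_map_eq_Inl) (auto dest: rooted_tuplesD embeddingsD)

lemma glued_embedding_glue_map:
  assumes "i < t" "v \<in> V i"
  shows "glued_embedding \<sigma> x y \<Phi> (glue_map a b \<sigma> i v) = \<Phi> i v"
proof (cases "\<Phi> i v \<in> {x, y}")
  case True
  then have "glue_map a b \<sigma> i v = Inl (\<Phi> i v = x)" by (rule glue_map_eq_Inl_tuple[OF assms])
  then show ?thesis using True by (auto simp: glued_embedding_Inl)
next
  case False
  then have "v \<notin> {a i, b i}" using rooted_tuplesD(2)[OF \<Phi> \<open>i < t\<close>] by auto
  moreover have "glue_map a b \<sigma> i v \<in> glue_V t V a b \<sigma>" using assms unfolding glue_V_def by auto
  ultimately show ?thesis unfolding glued_embedding_def glue_map_def by auto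
qed

lemma glued_embedding_in_PiE: "glued_embedding \<sigma> x y \<Phi> \<in> glue_V t V a b \<sigma> \<rightarrow>\<^sub>E VG"
proof -
  have "glued_embedding \<sigma> x y \<Phi> u \<in> VG" if "u \<in> glue_V t V a b \<sigma>" for u
  proof -
    obtain i v where "i < t" "v \<in> V i" "u = glue_map a b \<sigma> i v"
      using \<open>u \<in> glue_V t V a b \<sigma>\<close> unfolding glue_V_def by auto
    then show ?thesis
      using glued_embedding_glue_map embeddingsD(1)[OF rooted_tuplesD(1)[OF \<Phi>]] by auto
  qed
  moreover have "glued_embedding \<sigma> x y \<Phi> \<in> extensional (glue_V t V a b \<sigma>)"
    unfolding glued_embedding_def by simp
  ultimately show ?thesis by (simp add: PiE_iff)
qed

lemma inj_on_glued_embedding: "inj_on (glued_embedding \<sigma> x y \<Phi>) (glue_V t V a b \<sigma>)"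
proof (rule inj_onI)
  fix u1 u2 assume "u1 \<in> glue_V t V a b \<sigma>" "u2 \<in> glue_V t V a b \<sigma>"
    and eq: "glued_embedding \<sigma> x y \<Phi> u1 = glued_embedding \<sigma> x y \<Phi> u2"
  then obtain i v k w where iv: "i < t" "v \<in> V i" "u1 = glue_map a b \<sigma> i v"
    and kw: "k < t" "w \<in> V k" "u2 = glue_map a b \<sigma> k w"
    unfolding glue_V_def by auto
  then have same: "\<Phi> i v = \<Phi> k w" using eq glued_embedding_glue_map by simp
  show "u1 = u2"
  proof (cases "i = k")
    case True
    then show ?thesis
      using same iv kw embeddingsD(2)[OF rooted_tuplesD(1)[OF \<Phi>]] by (auto dest: inj_onD)
  next
    case False
    then have "\<Phi> i v \<in> {x, y}" using same iv kw rooted_tuplesD(3)[OF \<Phi> \<open>i < t\<close> \<open>k < t\<close>] by blast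
    then show ?thesis using same iv kw glue_map_eq_Inl_tuple by simp
  qed
qed

lemma glued_embedding_edge:
  assumes "e \<in> glue_E t E a b \<sigma>"
  shows "glued_embedding \<sigma> x y \<Phi> ` e \<in> EG"
proof -
  obtain i e0 where "i < t" "e0 \<in> E i" and e_eq: "e = glue_map a b \<sigma> i ` e0"
    using assms unfolding glue_E_def by auto
  have "e0 \<subseteq> V i" using graphs \<open>i < t\<close> \<open>e0 \<in> E i\<close> unfolding graph_def by blast
  have "glued_embedding \<sigma> x y \<Phi> ` e = (\<lambda>v. glued_embedding \<sigma> x y \<Phi> (glue_map a b \<sigma> i v)) ` e0"
    unfolding e_eq by (rule image_image)
  also have "\<dots> = \<Phi> i ` e0"
    using glued_embedding_glue_map[OF \<open>i < t\<close>] \<open>e0 \<subseteq> V i\<close> by (intro image_cong) auto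
  finally show ?thesis
    using embeddingsD(3)[OF rooted_tuplesD(1)[OF \<Phi> \<open>i < t\<close>] \<open>e0 \<in> E i\<close>] by simp
qed

lemma glued_embedding_in_embeddings:
  "glued_embedding \<sigma> x y \<Phi> \<in> embeddings (glue_V t V a b \<sigma>) (glue_E t E a b \<sigma>) VG EG"
  using glued_embedding_in_PiE inj_on_glued_embedding glued_embedding_edge
  unfolding embeddings_def by blast

lemma glued_embedding_determines_tuple:
  "\<Phi> = (\<lambda>i. if i < t then restrict (glued_embedding \<sigma> x y \<Phi> \<circ> glue_map a b \<sigma> i) (V i) else undefined)"
proof
  fix i
  show "\<Phi> i = (if i < t then restrict (glued_embedding \<sigma> x y \<Phi> \<circ> glue_map a b \<sigma> i) (V i) else undefined)"
  proof (cases "i < t")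
    case True
    have "\<Phi> i \<in> extensional (V i)"
      using embeddingsD(1)[OF rooted_tuplesD(1)[OF \<Phi> True]] by (simp add: PiE_iff)
    then show ?thesis
      using True by (intro extensionalityI[of _ "V i"]) (simp_all add: glued_embedding_glue_map)
  next
    case False
    have "\<Phi> \<in> extensional {..<t}" using \<Phi> unfolding rooted_tuples_def by (simp add: PiE_iff)
    then show ?thesis using False by (simp add: extensional_def)
  qed
qed

end

lemma copies_glued_eq_if_iso:
  assumes iso: "\<forall>G\<in>glued_family t V E a b. \<forall>G'\<in>glued_family t V E a b.
      graph_iso (fst G) (snd G) (fst G') (snd G')"
    and "H \<in> glued_family t V E a b" and "finite VG"
  shows "copies (glue_V t V a b \<sigma>) (glue_E t E a b \<sigma>) VG EG = copies (fst H) (snd H) VG EG"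
proof -
  obtain \<sigma>0 where H: "H = (glue_V t V a b \<sigma>0, glue_E t E a b \<sigma>0)"
    using \<open>H \<in> _\<close> unfolding glued_family_def by auto
  have "(glue_V t V a b \<sigma>, glue_E t E a b \<sigma>) \<in> glued_family t V E a b"
    unfolding glued_family_def by auto
  note iso_pair = iso[rule_format, OF \<open>H \<in> _\<close> this] iso[rule_format, OF this \<open>H \<in> _\<close>]
  have iso1: "graph_iso (glue_V t V a b \<sigma>0) (glue_E t E a b \<sigma>0) (glue_V t V a b \<sigma>) (glue_E t E a b \<sigma>)"
    using iso_pair(1) unfolding H by simp
  have iso2: "graph_iso (glue_V t V a b \<sigma>) (glue_E t E a b \<sigma>) (glue_V t V a b \<sigma>0) (glue_E t E a b \<sigma>0)"
    using iso_pair(2) unfolding H by simp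
  show ?thesis unfolding H fst_conv snd_conv using glue_E_subset finite_glue_V \<open>finite VG\<close>
    by (intro antisym copies_le_if_graph_iso[OF iso1] copies_le_if_graph_iso[OF iso2]) auto
qed

lemma glued_embedding_eqD:
  assumes \<Phi>: "\<Phi> \<in> rooted_tuples t V E a b VG EG {x, y}" "x \<noteq> y" "\<And>i. i < t \<Longrightarrow> \<sigma> i = (\<Phi> i (a i) = x)"
    and \<Phi>': "\<Phi>' \<in> rooted_tuples t V E a b VG EG {x', y'}" "x' \<noteq> y'" "\<And>i. i < t \<Longrightarrow> \<sigma> i = (\<Phi>' i (a i) = x')"
    and eq: "glued_embedding \<sigma> x y \<Phi> = glued_embedding \<sigma> x' y' \<Phi>'"
  shows "x = x'" "y = y'" "\<Phi> = \<Phi>'"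
proof -
  show "x = x'" "y = y'"
    using fun_cong[OF eq, of "Inl True"] fun_cong[OF eq, of "Inl False"] by (simp_all add: glued_embedding_Inl)
  have "\<Phi> = (\<lambda>i. if i < t then restrict (glued_embedding \<sigma> x y \<Phi> \<circ> glue_map a b \<sigma> i) (V i) else undefined)"
    by (rule glued_embedding_determines_tuple[OF \<Phi>])
  also have "\<dots> = \<Phi>'" unfolding eq by (rule glued_embedding_determines_tuple[OF \<Phi>', symmetric])
  finally show "\<Phi> = \<Phi>'" .
qed

lemma sum_card_rooted_tuples_le_sum_copies:
  fixes VG :: "'w::linorder set"
  assumes G: "graph VG EG" and "Good \<subseteq> EG"
  shows "(\<Sum>xy\<in>Good. card (rooted_tuples t V E a b VG EG xy))
           \<le> (\<Sum>\<sigma>\<in>(\<Pi>\<^sub>E i\<in>{..<t}. UNIV). copies (glue_V t V a b \<sigma>) (glue_E t E a b \<sigma>) VG EG)"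
proof -
  \<comment> \<open>Listing \<open>xy\<close> as \<open>{Min xy, Max xy}\<close> decides which endpoint receives \<open>Inl True\<close>.\<close>
  define orient where "orient xy \<Phi> = restrict (\<lambda>i. \<Phi> i (a i) = Min xy) {..<t}"
    for xy :: "'w set" and \<Phi> :: "nat \<Rightarrow> nat \<Rightarrow> 'w"
  define h where "h = (\<lambda>(xy, \<Phi>). (orient xy \<Phi>, glued_embedding (orient xy \<Phi>) (Min xy) (Max xy) \<Phi>))"
  define P where "P = Sigma Good (rooted_tuples t V E a b VG EG)"
  define Q where "Q = Sigma (\<Pi>\<^sub>E i\<in>{..<t}. UNIV)
    (\<lambda>\<sigma>. embeddings (glue_V t V a b \<sigma>) (glue_E t E a b \<sigma>) VG EG)"
  have finG: "finite VG" "finite Good"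
    using G \<open>Good \<subseteq> EG\<close> graph_finite_edges[OF G] unfolding graph_def by (auto intro: finite_subset)
  have tuple: "\<Phi> \<in> rooted_tuples t V E a b VG EG {Min xy, Max xy}" "Min xy \<noteq> Max xy"
    "xy = {Min xy, Max xy}" if "(xy, \<Phi>) \<in> P" for xy \<Phi>
  proof -
    have "card xy = 2" using that G \<open>Good \<subseteq> EG\<close> unfolding P_def graph_def by auto
    then show "xy = {Min xy, Max xy}" "Min xy \<noteq> Max xy" by (rule card_2_eq_Min_Max)+
    then show "\<Phi> \<in> rooted_tuples t V E a b VG EG {Min xy, Max xy}" using that unfolding P_def by auto
  qed
  have img: "h ` P \<subseteq> Q"
    using tuple unfolding h_def Q_def orient_def
    by (auto intro!: glued_embedding_in_embeddings)
  have inj: "inj_on h P"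
  proof (rule inj_onI, clarify)
    fix xy \<Phi> xy' \<Phi>' assume in_P: "(xy, \<Phi>) \<in> P" "(xy', \<Phi>') \<in> P" and eq: "h (xy, \<Phi>) = h (xy', \<Phi>')"
    define \<sigma> where "\<sigma> = orient xy \<Phi>"
    have \<sigma>: "\<sigma> = orient xy' \<Phi>'"
      and glued: "glued_embedding \<sigma> (Min xy) (Max xy) \<Phi> = glued_embedding \<sigma> (Min xy') (Max xy') \<Phi>'"
      using eq unfolding h_def \<sigma>_def by auto
    have "\<And>i. i < t \<Longrightarrow> \<sigma> i = (\<Phi> i (a i) = Min xy)" unfolding \<sigma>_def orient_def by simp
    moreover have "\<And>i. i < t \<Longrightarrow> \<sigma> i = (\<Phi>' i (a i) = Min xy')" unfolding \<sigma> orient_def by simp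
    ultimately have "Min xy = Min xy'" "Max xy = Max xy'" "\<Phi> = \<Phi>'"
      using glued_embedding_eqD[OF tuple(1,2)[OF in_P(1)] _ tuple(1,2)[OF in_P(2)] _ glued] by blast+
    then show "xy = xy' \<and> \<Phi> = \<Phi>'" using tuple(3)[OF in_P(1)] tuple(3)[OF in_P(2)] by simp
  qed
  have "finite Q"
    unfolding Q_def using finG finite_glue_V by (auto intro!: finite_SigmaI finite_PiE finite_embeddings)
  then have "card P \<le> card Q" by (rule card_inj_on_le[OF inj img])
  moreover have "card P = (\<Sum>xy\<in>Good. card (rooted_tuples t V E a b VG EG xy))"
    unfolding P_def using finG finite_V by (simp add: card_SigmaI finite_rooted_tuples)
  moreover have "card Q = (\<Sum>\<sigma>\<in>(\<Pi>\<^sub>E i\<in>{..<t}. UNIV). copies (glue_V t V a b \<sigma>) (glue_E t E a b \<sigma>) VG EG)"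
    unfolding Q_def copies_def using finG finite_glue_V
    by (simp add: card_SigmaI finite_PiE finite_embeddings)
  ultimately show ?thesis by simp
qed

end

section \<open>Dense host graphs\<close>

lemma le_if_mult_powr_le_square:
  fixes c n \<alpha> :: real
  assumes "1 \<le> n" "0 \<le> \<alpha>" "c * n powr (1 + \<alpha>) \<le> n ^ 2"
  shows "c \<le> n"
proof -
  have pos: "0 < n powr (1 + \<alpha>)" using assms by simp
  have "n ^ 2 = n powr 2" using assms by (simp add: powr_numeral)
  also have "\<dots> = n powr ((1 - \<alpha>) + (1 + \<alpha>))" by simp
  also have "\<dots> = n powr (1 - \<alpha>) * n powr (1 + \<alpha>)" by (rule powr_add)
  finally have "n ^ 2 = n powr (1 - \<alpha>) * n powr (1 + \<alpha>)" .
  then have "c \<le> n powr (1 - \<alpha>)" using assms(3) pos by (simp add: mult_le_cancel_right_pos)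
  also have "\<dots> \<le> n powr 1" using assms by (intro powr_mono) auto
  finally show ?thesis using assms by simp
qed

lemma ex_less:
  assumes edges: "\<forall>H\<in>F. snd H \<noteq> {}"
    and dense: "\<And>E. graph {0..<n} E \<Longrightarrow> X \<le> real (card E) \<Longrightarrow>
      \<exists>H\<in>F. contains {0..<n} E (fst H) (snd H)"
  shows "real (ex n F) < X"
proof -
  define free where "free E \<longleftrightarrow> graph {0..<n} E \<and> (\<forall>H\<in>F. \<not> contains {0..<n::nat} E (fst H) (snd H))"
    for E
  define S where "S = {card E | E. free E}"
  have "S \<subseteq> {..n ^ 2}"
  proof
    fix k assume "k \<in> S"
    then obtain E where "k = card E" "graph {0..<n} E" unfolding S_def free_def by blast
    then show "k \<in> {..n ^ 2}" using graph_card_edges_le[of "{0..<n}" E] by simp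
  qed
  then have "finite S" by (rule finite_subset) simp
  have "\<not> contains {0..<n} {} (fst H) (snd H)" if "H \<in> F" for H
    using edges that unfolding contains_def embeddings_def by auto
  then have "free {}" unfolding free_def graph_def by simp
  then have "card {} \<in> S" unfolding S_def by force
  then have "Max S \<in> S" using \<open>finite S\<close> by (intro Max_in) auto
  moreover have "ex n F = Max S" unfolding ex_def S_def free_def by simp
  ultimately obtain E where "ex n F = card E" "free E" unfolding S_def by auto
  moreover have "\<not> X \<le> real (card E)" using dense \<open>free E\<close> unfolding free_def by blast
  ultimately show ?thesis by simp
qed

text \<open>Turns \<open>(e / 2) * \<tau>_1 * ... * \<tau>_t \<le> 2 ^ t * c\<close> into the Erdos-Simonovits bound for
  the glued graph \<open>H\<close>, using \<open>e(H) \<ge> 1 + \<Sum>(e(H_i) - 1)\<close>, \<open>v(H) \<le> 2 + \<Sum>(v(H_i) - 2)\<close>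
  and \<open>p \<le> 1 \<le> n\<close>.\<close>

lemma glued_count_bound:
  fixes p n c :: real and h v :: "nat \<Rightarrow> nat"
  assumes "0 < p" "p \<le> 1" "1 \<le> n" "\<And>i. i < t \<Longrightarrow> 0 \<le> d i"
    and eH: "1 + (\<Sum>i<t. h i - 1) \<le> eH" and vH: "vH \<le> 2 + (\<Sum>i<t. v i - 2)"
    and count: "p * n ^ 2 / 2 * (\<Prod>i<t. d i * p ^ (h i - 1) * n ^ (v i - 2)) \<le> 2 ^ t * c"
  shows "(\<Prod>i<t. d i) / 2 ^ (t + 1) * p ^ eH * n ^ vH \<le> c"
proof -
  define D where "D = (\<Prod>i<t. d i)"
  have "0 \<le> D" unfolding D_def using assms(4) by (auto intro: prod_nonneg)
  have "D / 2 ^ (t + 1) * p ^ eH * n ^ vH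
      \<le> D / 2 ^ (t + 1) * p ^ (1 + (\<Sum>i<t. h i - 1)) * n ^ (2 + (\<Sum>i<t. v i - 2))"
    using assms \<open>0 \<le> D\<close> by (intro mult_mono power_decreasing power_increasing) auto
  also have "\<dots> = (p * n ^ 2 / 2 * (\<Prod>i<t. d i * p ^ (h i - 1) * n ^ (v i - 2))) / 2 ^ t"
    unfolding D_def by (simp add: prod.distrib power_sum power_add power2_eq_square field_simps)
  also have "\<dots> \<le> c" using count by (simp add: divide_le_eq mult.commute)
  finally show ?thesis unfolding D_def .
qed

locale ES_gluing = gluing +
  fixes al A eta :: "nat \<Rightarrow> real"
  assumes al_nonneg: "\<And>i. i < t \<Longrightarrow> 0 \<le> al i"
    and eta_pos: "\<And>i. i < t \<Longrightarrow> 0 < eta i"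
    and parts_ES_good: "\<And>i. i < t \<Longrightarrow> ES_good (al i) (A i) (eta i) (V i) (E i)"
begin

definition exponent :: real where "exponent = Max (al ` {..<t})"

definition vertex_total :: nat where "vertex_total = (\<Sum>i<t. card (V i))"

text \<open>\<open>K = L * 2 ^ (3 + s)\<close> with \<open>L = 2 * t\<close>: each of the \<open>t\<close> parts then spoils fewer than
  \<open>e / (2 * t)\<close> edges, so at least half of the edges are well rooted for all parts.\<close>

definition K :: real where "K = 2 * real t * 2 ^ (3 + vertex_total)"

definition glued_A :: real where "glued_A = 2 * real vertex_total + 1 + (\<Sum>i<t. K * max (A i) 0)"

definition coeff :: "nat \<Rightarrow> real" where "coeff i = eta i / (2 * K ^ card (E i) * 4 ^ card (V i))"

definition threshold :: "nat \<Rightarrow> real \<Rightarrow> nat \<Rightarrow> real" where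
  "threshold i p n = coeff i * p ^ (card (E i) - 1) * real n ^ (card (V i) - 2)"

definition glued_eta :: real where "glued_eta = (\<Prod>i<t. coeff i) / 2 ^ (t + 1)"

lemma al_le_exponent: "i < t \<Longrightarrow> al i \<le> exponent"
  unfolding exponent_def by (intro Max_ge) auto

lemma exponent_nonneg: "0 \<le> exponent"
  using al_le_exponent[of 0] al_nonneg[of 0] one_le_t by simp

lemma K_pos: "0 < K"
  using one_le_t unfolding K_def by simp

lemma le_glued_A: "1 \<le> glued_A" "i < t \<Longrightarrow> K * max (A i) 0 \<le> glued_A"
proof -
  have terms: "0 \<le> K * max (A i) 0" for i using K_pos by simp
  show "1 \<le> glued_A" unfolding glued_A_def using terms by (simp add: sum_nonneg)
  show "K * max (A i) 0 \<le> glued_A" if "i < t"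
    using that terms member_le_sum[of i "{..<t}" "\<lambda>i. K * max (A i) 0"] unfolding glued_A_def by simp
qed

lemma coeff_pos: "i < t \<Longrightarrow> 0 < coeff i"
  unfolding coeff_def using eta_pos K_pos by simp

lemma threshold_pos: "i < t \<Longrightarrow> 0 < p \<Longrightarrow> 0 < n \<Longrightarrow> 0 < threshold i p n"
  unfolding threshold_def using coeff_pos by simp

lemma glued_eta_pos: "0 < glued_eta"
  unfolding glued_eta_def using coeff_pos by (intro divide_pos_pos prod_pos) auto

context
  fixes VG :: "nat set" and EG n
  assumes G: "graph VG EG" "card VG = n" "0 < n"
    and dense: "glued_A * real n powr (1 + exponent) \<le> real (card EG)"
begin

lemma dense_edges_nonempty: "EG \<noteq> {}"
proof -
  have "1 \<le> real n powr (1 + exponent)" using G(3) exponent_nonneg by (simp add: ge_one_powr_ge_zero)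
  then have "1 * 1 \<le> glued_A * real n powr (1 + exponent)" using le_glued_A(1) by (intro mult_mono) auto
  then show ?thesis using dense by auto
qed

lemma dense_vertex_total_le: "2 * vertex_total \<le> n"
proof -
  have "real (card EG) \<le> real n ^ 2" using graph_card_edges_le[OF G(1)] G(2) by (simp flip: of_nat_power)
  then have "glued_A * real n powr (1 + exponent) \<le> real n ^ 2" using dense by linarith
  moreover have "1 \<le> real n" using G(3) by simp
  ultimately have "glued_A \<le> real n" using le_if_mult_powr_le_square exponent_nonneg by blast
  moreover have "0 \<le> (\<Sum>i<t. K * max (A i) 0)" using K_pos by (intro sum_nonneg) simp
  ultimately have "real (2 * vertex_total) \<le> real n" unfolding glued_A_def by simp
  then show ?thesis by (simp only: of_nat_le_iff)
qed

lemma card_poorly_rooted_part_less: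
  assumes "i < t"
  shows "real (card (poorly_rooted_edges (V i) (E i) (a i) (b i) VG EG vertex_total
           (threshold i (real (card EG) / real n ^ 2) n))) < real (card EG) / (2 * real t)"
proof -
  have "K * max (A i) 0 * real n powr (1 + al i) \<le> glued_A * real n powr (1 + exponent)"
    using assms le_glued_A K_pos G(3) al_le_exponent by (intro mult_mono powr_mono) auto
  then show ?thesis
    using card_poorly_rooted_edges_less[OF G(1,2) dense_edges_nonempty
        graphs root_edges eta_pos parts_ES_good, OF assms assms assms assms, of "2 * real t" vertex_total] one_le_t al_nonneg[OF assms]
      dense dense_vertex_total_le
    unfolding threshold_def coeff_def K_def by simp
qed

lemma well_rooted_edges:
  obtains Good where "Good \<subseteq> EG" "real (card EG) / 2 \<le> real (card Good)"
    "\<And>xy i C. xy \<in> Good \<Longrightarrow> i < t \<Longrightarrow> C \<subseteq> VG \<Longrightarrow> card C \<le> vertex_total \<Longrightarrow> C \<inter> xy = {} \<Longrightarrow>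
      threshold i (real (card EG) / real n ^ 2) n
        \<le> real (card (rooted_embeddings (V i) (E i) (a i) (b i) VG EG xy C))"
proof -
  define e where "e = real (card EG)"
  define B where "B i = poorly_rooted_edges (V i) (E i) (a i) (b i) VG EG vertex_total
    (threshold i (e / real n ^ 2) n)" for i
  define Good where "Good = EG - (\<Union>i<t. B i)"
  have "(\<Union>i<t. B i) \<subseteq> EG" unfolding B_def poorly_rooted_edges_def by blast
  have "real (card (\<Union>i<t. B i)) \<le> (\<Sum>i<t. real (card (B i)))"
    using card_UN_le[of "{..<t}" B] by (simp flip: of_nat_sum)
  also have "\<dots> < (\<Sum>i<t. e / (2 * real t))"
    using card_poorly_rooted_part_less one_le_t unfolding B_def e_def
    by (intro sum_strict_mono) (auto simp: lessThan_empty_iff)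
  also have "\<dots> = e / 2" using one_le_t by simp
  finally have "e / 2 \<le> real (card Good)"
    using \<open>(\<Union>i<t. B i) \<subseteq> EG\<close> graph_finite_edges[OF G(1)] card_mono[of EG "\<Union>i<t. B i"]
    unfolding Good_def e_def by (simp add: card_Diff_subset finite_subset of_nat_diff)
  have well: "threshold i (real (card EG) / real n ^ 2) n
      \<le> real (card (rooted_embeddings (V i) (E i) (a i) (b i) VG EG xy C))"
    if "xy \<in> Good" "i < t" "C \<subseteq> VG" "card C \<le> vertex_total" "C \<inter> xy = {}" for xy i C
  proof -
    have "xy \<in> EG" "xy \<notin> B i" using that(1,2) unfolding Good_def by auto
    then show ?thesis using that(3-5) unfolding B_def e_def by (rule not_poorly_rootedD)
  qed
  show ?thesis
  proof (rule that)
    show "Good \<subseteq> EG" unfolding Good_def by blast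
    show "real (card EG) / 2 \<le> real (card Good)" using \<open>e / 2 \<le> _\<close> unfolding e_def .
  qed (fact well)
qed

lemma many_glued_copies:
  "real (card EG) / 2 * (\<Prod>i<t. threshold i (real (card EG) / real n ^ 2) n)
     \<le> (\<Sum>\<sigma>\<in>(\<Pi>\<^sub>E i\<in>{..<t}. UNIV). real (copies (glue_V t V a b \<sigma>) (glue_E t E a b \<sigma>) VG EG))"
proof -
  define \<tau> where "\<tau> i = threshold i (real (card EG) / real n ^ 2) n" for i
  obtain Good where Good: "Good \<subseteq> EG" "real (card EG) / 2 \<le> real (card Good)"
    and well: "\<And>xy i C. xy \<in> Good \<Longrightarrow> i < t \<Longrightarrow> C \<subseteq> VG \<Longrightarrow> card C \<le> vertex_total \<Longrightarrow>
      C \<inter> xy = {} \<Longrightarrow> \<tau> i \<le> real (card (rooted_embeddings (V i) (E i) (a i) (b i) VG EG xy C))"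
    using well_rooted_edges unfolding \<tau>_def by blast
  have "0 < real (card EG) / real n ^ 2"
    using dense_edges_nonempty graph_finite_edges[OF G(1)] G(3) by (simp add: card_gt_0_iff)
  then have \<tau>_pos: "0 < \<tau> i" if "i < t" for i unfolding \<tau>_def using threshold_pos that G(3) by blast
  have "0 \<le> (\<Prod>i<t. \<tau> i)" using \<tau>_pos by (intro prod_nonneg) (simp add: less_imp_le)
  with Good(2) have "real (card EG) / 2 * (\<Prod>i<t. \<tau> i) \<le> real (card Good) * (\<Prod>i<t. \<tau> i)"
    by (rule mult_right_mono)
  also have "\<dots> = (\<Sum>xy\<in>Good. \<Prod>i<t. \<tau> i)" by simp
  also have "\<dots> \<le> (\<Sum>xy\<in>Good. real (card (rooted_tuples t V E a b VG EG xy)))"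
    using G finite_V well \<tau>_pos unfolding graph_def vertex_total_def
    by (intro sum_mono card_rooted_tuples_ge) (auto intro: less_imp_le)
  also have "\<dots> \<le> (\<Sum>\<sigma>\<in>(\<Pi>\<^sub>E i\<in>{..<t}. UNIV). real (copies (glue_V t V a b \<sigma>) (glue_E t E a b \<sigma>) VG EG))"
    using sum_card_rooted_tuples_le_sum_copies[OF G(1) Good(1)] by (simp flip: of_nat_sum)
  finally show ?thesis unfolding \<tau>_def .
qed

lemma dense_graph_contains_glued: "\<exists>\<sigma>. contains VG EG (glue_V t V a b \<sigma>) (glue_E t E a b \<sigma>)"
proof -
  have "0 < real (card EG) / real n ^ 2" "0 < real (card EG)"
    using dense_edges_nonempty graph_finite_edges[OF G(1)] G(3) by (simp_all add: card_gt_0_iff)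
  moreover have "0 < (\<Prod>i<t. threshold i (real (card EG) / real n ^ 2) n)"
    using threshold_pos \<open>0 < real (card EG) / real n ^ 2\<close> G(3) by (intro prod_pos) blast
  ultimately have "0 < real (card EG) / 2 * (\<Prod>i<t. threshold i (real (card EG) / real n ^ 2) n)"
    by simp
  then have "0 < (\<Sum>\<sigma>\<in>(\<Pi>\<^sub>E i\<in>{..<t}. UNIV). real (copies (glue_V t V a b \<sigma>) (glue_E t E a b \<sigma>) VG EG))"
    using many_glued_copies by linarith
  then obtain \<sigma> where "0 < copies (glue_V t V a b \<sigma>) (glue_E t E a b \<sigma>) VG EG"
    using sum_nonpos[of "\<Pi>\<^sub>E i\<in>{..<t}. UNIV" "\<lambda>\<sigma>. real (copies (glue_V t V a b \<sigma>) (glue_E t E a b \<sigma>) VG EG)"]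
    by (force simp: not_less)
  then have "embeddings (glue_V t V a b \<sigma>) (glue_E t E a b \<sigma>) VG EG \<noteq> {}"
    unfolding copies_def by auto
  then show ?thesis unfolding contains_def by blast
qed

end

lemma ex_glued_family_less:
  assumes "0 < n"
  shows "real (ex n (glued_family t V E a b)) < glued_A * real n powr (1 + exponent)"
proof (rule ex_less)
  have "glue_E t E a b \<sigma> \<noteq> {}" for \<sigma> using card_glue_E_ge[of \<sigma>] by auto
  then show "\<forall>H\<in>glued_family t V E a b. snd H \<noteq> {}" unfolding glued_family_def by auto
  fix EG assume "graph {0..<n} EG" "glued_A * real n powr (1 + exponent) \<le> real (card EG)"
  then show "\<exists>H\<in>glued_family t V E a b. contains {0..<n} EG (fst H) (snd H)"
    using dense_graph_contains_glued[of "{0..<n}" EG n] assms unfolding glued_family_def by auto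
qed

lemma ex_glued_family_bigo:
  "(\<lambda>n. real (ex n (glued_family t V E a b))) \<in> O(\<lambda>n. real n powr (1 + exponent))"
proof (rule bigoI[of _ glued_A])
  show "\<forall>\<^sub>F n in at_top. norm (real (ex n (glued_family t V E a b)))
      \<le> glued_A * norm (real n powr (1 + exponent))"
    using ex_glued_family_less by (intro eventually_at_top_linorderI[of 1]) (simp add: less_imp_le)
qed

lemma ES_good_glued:
  assumes iso: "\<forall>G\<in>glued_family t V E a b. \<forall>G'\<in>glued_family t V E a b.
      graph_iso (fst G) (snd G) (fst G') (snd G')"
    and "H \<in> glued_family t V E a b"
  shows "ES_good exponent glued_A glued_eta (fst H) (snd H)"
  unfolding ES_good_def
proof (intro allI impI, elim conjE)
  fix VG :: "nat set" and EG n
  assume G: "graph VG EG" "card VG = n" "0 < n"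
    and dense: "glued_A * real n powr (1 + exponent) \<le> real (card EG)"
  obtain \<sigma>0 where H: "H = (glue_V t V a b \<sigma>0, glue_E t E a b \<sigma>0)"
    using \<open>H \<in> _\<close> unfolding glued_family_def by auto
  define p where "p = real (card EG) / real n ^ 2"
  define c where "c = copies (fst H) (snd H) VG EG"
  have "finite VG" using G(1) unfolding graph_def by simp
  then have "copies (glue_V t V a b \<sigma>) (glue_E t E a b \<sigma>) VG EG = c" for \<sigma>
    unfolding c_def by (rule copies_glued_eq_if_iso[OF iso \<open>H \<in> _\<close>])
  then have "(\<Sum>\<sigma>\<in>(\<Pi>\<^sub>E i\<in>{..<t}. UNIV). real (copies (glue_V t V a b \<sigma>) (glue_E t E a b \<sigma>) VG EG))
      = 2 ^ t * real c"
    by (simp add: card_PiE)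
  then have "p * real n ^ 2 / 2 * (\<Prod>i<t. coeff i * p ^ (card (E i) - 1) * real n ^ (card (V i) - 2))
      \<le> 2 ^ t * real c"
    using many_glued_copies[OF G dense] G(3) unfolding p_def threshold_def by simp
  moreover have "0 < p" "p \<le> 1"
    using dense_edges_nonempty[OF G dense] graph_finite_edges[OF G(1)] graph_card_edges_le[OF G(1)] G(2,3)
    unfolding p_def by (simp_all add: card_gt_0_iff flip: of_nat_power)
  ultimately show "glued_eta * p ^ card (snd H) * real n ^ card (fst H) \<le> real c"
    unfolding glued_eta_def H using G(3) coeff_pos card_glue_E_ge card_glue_V_le
    by (intro glued_count_bound[where h = "\<lambda>i. card (E i)" and v = "\<lambda>i. card (V i)"])
      (auto intro: less_imp_le)
qed

end

theorem theorem3p4: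
  fixes t :: nat
    and V :: "nat \<Rightarrow> nat set" and E :: "nat \<Rightarrow> nat set set"
    and a b :: "nat \<Rightarrow> nat"
    and al A eta :: "nat \<Rightarrow> real"
  assumes "t \<ge> 1"
    and "\<forall>i<t. graph (V i) (E i)"
    and "\<forall>i<t. 0 \<le> al i \<and> al i < 1"
    and "\<forall>i<t. eta i > 0"
    and "\<forall>i<t. ES_good (al i) (A i) (eta i) (V i) (E i)"
    and "\<forall>i<t. {a i, b i} \<in> E i"
  shows "(\<lambda>n. real (ex n (glued_family t V E a b)))
           \<in> O(\<lambda>n. real n powr (1 + Max (al ` {..<t})))
         \<and> ((\<forall>G\<in>glued_family t V E a b. \<forall>G'\<in>glued_family t V E a b.
            graph_iso (fst G) (snd G) (fst G') (snd G')) \<longrightarrow>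
         (\<forall>G\<in>glued_family t V E a b. \<exists>A' \<eta>'. A' > 0 \<and> \<eta>' > 0 \<and>
            ES_good (Max (al ` {..<t})) A' \<eta>' (fst G) (snd G)))"
proof -
  interpret ES_gluing t V E a b al A eta
    using assms by unfold_locales auto
  have "\<exists>A' \<eta>'. A' > 0 \<and> \<eta>' > 0 \<and> ES_good exponent A' \<eta>' (fst G) (snd G)"
    if "\<forall>G\<in>glued_family t V E a b. \<forall>G'\<in>glued_family t V E a b.
          graph_iso (fst G) (snd G) (fst G') (snd G')"
      and "G \<in> glued_family t V E a b" for G
    using ES_good_glued[OF that] le_glued_A(1) glued_eta_pos
    by (intro exI[of _ glued_A] exI[of _ glued_eta]) auto
  then show ?thesis using ex_glued_family_bigo unfolding exponent_def by blast
qed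

end
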